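(* Let $f \in \mathcal{S}^1_{\mu,L}(\mathbb{R}^d)$ with $0<\mu\le L$, let $x^\star$ be its unique minimizer, let $r\ge 2$, $0<s<1/L$, and $K := \max\left\{0, \frac{3r^2 - 4r - 12}{8}\right\}$. Let $\{x_k\},\{y_k\}$ be generated by NAG from $x_0=y_0\in\mathbb{R}^d$, and for integers $k\ge 1$ define \[ \mathcal{E}(k) := s(k+1)(k+r+1)\big(f(x_{k+1}) - f(x^\star)\big) + \frac12\Big\|(k-1)(x_k - x_{k-1}) + r(x_k - x^\star) - s(k+r)\nabla f(y_k)\Big\|^2 . \] Then for every integer $k\ge \max\{1,K\}$, \[ \mathcal{E}(k+1) - \mathcal{E}(k) \le -\mu s\cdot\frac{1 - Ls}{4}\cdot \mathcal{E}(k+1). \]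
   Context: $\mathcal{S}^1_{\mu,L}(\mathbb{R}^d)$ denotes the class of continuously differentiable convex functions $f:\mathbb{R}^d\to\mathbb{R}$ whose gradient is $L$-Lipschitz and which are $\mu$-strongly convex, $f(y)\ge f(x)+\langle\nabla f(x),y-x\rangle+\frac{\mu}{2}\|y-x\|^2$ for all $x,y$. NAG with step size $s$ and momentum parameter $r$ is the iteration, for $k \ge 0$: $x_{k+1} = y_k - s\nabla f(y_k)$, $\; y_{k+1} = x_{k+1} + \frac{k}{k+r+1}(x_{k+1} - x_k)$. *)

theory Defs
  imports "HOL-Analysis.Analysis"
begin

definition S1 :: "real \<Rightarrow> real \<Rightarrow> ('a::euclidean_space \<Rightarrow> real) \<Rightarrow> ('a \<Rightarrow> 'a) \<Rightarrow> bool" where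
  "S1 mu L f grad \<longleftrightarrow>
     (\<forall>x. (f has_derivative (\<lambda>h. grad x \<bullet> h)) (at x)) \<and>
     continuous_on UNIV grad \<and>
     convex_on UNIV f \<and>
     (\<forall>x y. norm (grad x - grad y) \<le> L * norm (x - y)) \<and>
     (\<forall>x y. f y \<ge> f x + grad x \<bullet> (y - x) + mu / 2 * (norm (y - x))\<^sup>2)"

definition NAG :: "('a::euclidean_space \<Rightarrow> 'a) \<Rightarrow> real \<Rightarrow> real \<Rightarrow> (nat \<Rightarrow> 'a) \<Rightarrow> (nat \<Rightarrow> 'a) \<Rightarrow> bool" where
  "NAG grad s r x y \<longleftrightarrow> x 0 = y 0 \<and>
     (\<forall>k. x (Suc k) = y k - s *\<^sub>R grad (y k)) \<and>
     (\<forall>k. y (Suc k) = x (Suc k) + (real k / (real k + r + 1)) *\<^sub>R (x (Suc k) - x k))"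

text \<open>Lyapunov function E(k) (meaningful for k \<ge> 1).\<close>
definition lyapE :: "('a::euclidean_space \<Rightarrow> real) \<Rightarrow> ('a \<Rightarrow> 'a) \<Rightarrow> real \<Rightarrow> real \<Rightarrow> 'a \<Rightarrow> (nat \<Rightarrow> 'a) \<Rightarrow> (nat \<Rightarrow> 'a) \<Rightarrow> nat \<Rightarrow> real" where
  "lyapE f grad s r xs x y k =
     s * (real k + 1) * (real k + r + 1) * (f (x (Suc k)) - f xs)
     + 1/2 * (norm ((real k - 1) *\<^sub>R (x k - x (k - 1)) + r *\<^sub>R (x k - xs)
                    - (s * (real k + r)) *\<^sub>R grad (y k)))\<^sup>2"

end

theory Submission imports Defs begin

text \<open>Put \<open>m = k + 1\<close>, \<open>N = m + r\<close>, \<open>w = y\<^sub>k\<^sub>+\<^sub>1 - x\<^sub>k\<^sub>+\<^sub>1\<close>, \<open>u = y\<^sub>k\<^sub>+\<^sub>1 - x\<^sup>\<star>\<close> and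
  \<open>g = \<nabla>f(y\<^sub>k\<^sub>+\<^sub>1)\<close>. The NAG recursion turns the vector inside \<open>\<E>(k)\<close> into \<open>m w + r u\<close>
  and the one inside \<open>\<E>(k+1)\<close> into \<open>m w + r u - s N g\<close>, so both Lyapunov values are
  expressed through one point \<open>y\<^sub>k\<^sub>+\<^sub>1\<close> and one gradient step from it. Strong convexity at
  \<open>y\<^sub>k\<^sub>+\<^sub>1\<close> (towards \<open>x\<^sub>k\<^sub>+\<^sub>1\<close> and \<open>x\<^sup>\<star>\<close>) and the descent lemma give
  \<open>\<E>(k+1) - \<E>(k) \<le> -(\<mu>sN/2 (m\<parallel>w\<parallel>\<^sup>2 + r\<parallel>u\<parallel>\<^sup>2) + s\<^sup>2N\<^sup>2(1-Ls)/2 \<parallel>g\<parallel>\<^sup>2)\<close>, while the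
  Polyak-Lojasiewicz bound \<open>f(x\<^sub>k\<^sub>+\<^sub>2) - f(x\<^sup>\<star>) \<le> \<parallel>g\<parallel>\<^sup>2/(2\<mu>)\<close> and
  \<open>\<parallel>a+b+c\<parallel>\<^sup>2 \<le> 3(\<parallel>a\<parallel>\<^sup>2+\<parallel>b\<parallel>\<^sup>2+\<parallel>c\<parallel>\<^sup>2)\<close> show that \<open>\<mu>s(1-Ls)/4 \<cdot> \<E>(k+1)\<close> is at most
  the same quantity.\<close>

lemma smooth_descent:
  fixes f :: "'a::real_inner \<Rightarrow> real"
  assumes deriv: "\<forall>x. (f has_derivative (\<lambda>h. grad x \<bullet> h)) (at x)"
    and lipschitz: "\<forall>x y. norm (grad x - grad y) \<le> L * norm (x - y)"
  shows "f z \<le> f y + grad y \<bullet> (z - y) + L/2 * (norm (z - y))\<^sup>2"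
proof -
  define d where "d = z - y"
  define h where "h t = f (y + t *\<^sub>R d) - t * (grad y \<bullet> d) - L/2 * t\<^sup>2 * (norm d)\<^sup>2" for t
  have h_deriv: "(h has_real_derivative ((grad (y + t *\<^sub>R d) - grad y) \<bullet> d - L * t * (norm d)\<^sup>2)) (at t)"
    for t
  proof -
    have "((\<lambda>t. y + t *\<^sub>R d) has_derivative (\<lambda>h. h *\<^sub>R d)) (at t)"
      by (auto intro!: derivative_eq_intros)
    from has_derivative_compose[OF this deriv[rule_format]]
    have "((\<lambda>t. f (y + t *\<^sub>R d)) has_real_derivative (grad (y + t *\<^sub>R d) \<bullet> d)) (at t)"
      by (simp add: has_real_derivative_iff_has_vector_derivative has_vector_derivative_def mult.commute)
    then show ?thesis
      unfolding h_def
      by (auto intro!: derivative_eq_intros simp: inner_diff_left algebra_simps power2_eq_square)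
  qed
  have "h 1 \<le> h 0"
  proof (rule DERIV_nonpos_imp_nonincreasing[of 0 1 h])
    fix t :: real assume t: "0 \<le> t" "t \<le> 1"
    have "(grad (y + t *\<^sub>R d) - grad y) \<bullet> d \<le> norm (grad (y + t *\<^sub>R d) - grad y) * norm d"
      by (rule norm_cauchy_schwarz)
    also have "\<dots> \<le> L * norm (t *\<^sub>R d) * norm d"
      using lipschitz[rule_format, of "y + t *\<^sub>R d" y] by (intro mult_right_mono) auto
    also have "\<dots> = L * t * (norm d)\<^sup>2"
      using t by (simp add: power2_eq_square)
    finally show "\<exists>D. DERIV h t :> D \<and> D \<le> 0"
      using h_deriv by fastforce
  qed simp
  then show ?thesis
    unfolding h_def d_def by simp
qed

lemma S1_gradient_step:
  assumes "S1 mu L f grad"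
  shows "f (y - s *\<^sub>R grad y) \<le> f y - s * (1 - L * s / 2) * (norm (grad y))\<^sup>2"
proof -
  have "f (y - s *\<^sub>R grad y) \<le> f y + grad y \<bullet> (- s *\<^sub>R grad y) + L/2 * (norm (- s *\<^sub>R grad y))\<^sup>2"
    using smooth_descent[of f grad L "y - s *\<^sub>R grad y" y] assms by (simp add: S1_def)
  then show ?thesis
    by (simp add: power_mult_distrib dot_square_norm algebra_simps power2_eq_square)
qed

lemma strongly_convex_gap_le_gradient:
  fixes f :: "'a::real_inner \<Rightarrow> real"
  assumes strong: "\<forall>x y. f y \<ge> f x + grad x \<bullet> (y - x) + mu / 2 * (norm (y - x))\<^sup>2"
    and "0 < mu"
  shows "f y - f z \<le> (norm (grad y))\<^sup>2 / (2 * mu)"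
proof -
  define d where "d = z - y"
  have "0 \<le> (norm (mu *\<^sub>R d + grad y))\<^sup>2"
    by simp
  also have "\<dots> = mu\<^sup>2 * (norm d)\<^sup>2 + 2 * mu * (grad y \<bullet> d) + (norm (grad y))\<^sup>2"
    unfolding power2_norm_eq_inner
    by (simp add: inner_add_left inner_add_right inner_commute algebra_simps power2_eq_square)
  finally have "- (norm (grad y))\<^sup>2 / (2 * mu) \<le> grad y \<bullet> d + mu / 2 * (norm d)\<^sup>2"
    using \<open>0 < mu\<close> by (simp add: field_simps power2_eq_square)
  moreover have "f y + grad y \<bullet> d + mu / 2 * (norm d)\<^sup>2 \<le> f z"
    using strong unfolding d_def by blast
  ultimately show ?thesis
    by linarith
qed

lemma norm_add3_power2_le:
  fixes a b c :: "'a::real_inner"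
  shows "(norm (a + b + c))\<^sup>2 \<le> 3 * ((norm a)\<^sup>2 + (norm b)\<^sup>2 + (norm c)\<^sup>2)"
proof -
  have "0 \<le> (norm (a - b))\<^sup>2 + (norm (b - c))\<^sup>2 + (norm (a - c))\<^sup>2"
    by simp
  then show ?thesis
    unfolding power2_norm_eq_inner
    by (simp add: inner_add_left inner_add_right inner_diff_left inner_diff_right inner_commute
        algebra_simps)
qed

lemma NAG_momentum:
  assumes "NAG grad s r x y" "0 \<le> r"
  shows "(real k + r + 1) *\<^sub>R (y (Suc k) - x (Suc k)) = real k *\<^sub>R (x (Suc k) - x k)"
proof -
  have "real k + r + 1 \<noteq> 0"
    using assms(2) by linarith
  then show ?thesis
    using assms(1) by (simp add: NAG_def)
qed

lemma lyapE_NAG: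
  assumes nag: "NAG grad s r x y" and "0 \<le> r" "1 \<le> k"
  shows "lyapE f grad s r xs x y k
    = s * real (Suc k) * (real (Suc k) + r) * (f (x (Suc k)) - f xs)
      + 1/2 * (norm (real (Suc k) *\<^sub>R (y (Suc k) - x (Suc k)) + r *\<^sub>R (y (Suc k) - xs)))\<^sup>2"
proof -
  obtain j where k: "k = Suc j"
    using \<open>1 \<le> k\<close> by (cases k) auto
  have step: "x (Suc k) = y k - s *\<^sub>R grad (y k)"
    using nag by (simp add: NAG_def)
  have "(real k - 1) *\<^sub>R (x k - x (k - 1)) + r *\<^sub>R (x k - xs) - (s * (real k + r)) *\<^sub>R grad (y k)
      = (real k + r) *\<^sub>R (y k - x k) + r *\<^sub>R (x k - xs) - (s * (real k + r)) *\<^sub>R grad (y k)"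
    using NAG_momentum[OF assms(1,2), of j] by (simp add: k algebra_simps)
  also have "\<dots> = real k *\<^sub>R (x (Suc k) - x k) + r *\<^sub>R (x (Suc k) - xs)"
    unfolding step by (simp add: algebra_simps)
  also have "\<dots> = real (Suc k) *\<^sub>R (y (Suc k) - x (Suc k)) + r *\<^sub>R (y (Suc k) - xs)"
    using NAG_momentum[OF assms(1,2), of k] by (simp add: algebra_simps)
  finally have vector: "(real k - 1) *\<^sub>R (x k - x (k - 1)) + r *\<^sub>R (x k - xs)
      - (s * (real k + r)) *\<^sub>R grad (y k)
      = real (Suc k) *\<^sub>R (y (Suc k) - x (Suc k)) + r *\<^sub>R (y (Suc k) - xs)" .
  show ?thesis
    unfolding lyapE_def vector by (simp add: algebra_simps)
qed

lemma lyapE_Suc_NAG: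
  assumes nag: "NAG grad s r x y" and "0 \<le> r"
  shows "lyapE f grad s r xs x y (Suc k)
    = s * (real (Suc k) + 1) * (real (Suc k) + r + 1)
        * (f (y (Suc k) - s *\<^sub>R grad (y (Suc k))) - f xs)
      + 1/2 * (norm (real (Suc k) *\<^sub>R (y (Suc k) - x (Suc k)) + r *\<^sub>R (y (Suc k) - xs)
                     - (s * (real (Suc k) + r)) *\<^sub>R grad (y (Suc k))))\<^sup>2"
proof -
  have vector: "(real (Suc k) - 1) *\<^sub>R (x (Suc k) - x (Suc k - 1)) + r *\<^sub>R (x (Suc k) - xs)
      = real (Suc k) *\<^sub>R (y (Suc k) - x (Suc k)) + r *\<^sub>R (y (Suc k) - xs)"
    using NAG_momentum[OF assms, of k] by (simp add: algebra_simps)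
  have step: "x (Suc (Suc k)) = y (Suc k) - s *\<^sub>R grad (y (Suc k))"
    using nag by (simp add: NAG_def)
  show ?thesis
    unfolding lyapE_def vector step by simp
qed

lemma momentum_weight_le:
  fixes m r :: real
  assumes "0 \<le> m" "2 \<le> r"
  shows "(m + 1) * (m + r + 1) \<le> (m + r)\<^sup>2"
proof -
  have "(m + r)\<^sup>2 - (m + 1) * (m + r + 1) = m * (r - 2) + (r * r - r - 1)"
    by (simp add: algebra_simps power2_eq_square)
  moreover have "2 * r \<le> r * r"
    using \<open>2 \<le> r\<close> by (simp add: mult_right_mono)
  moreover have "0 \<le> m * (r - 2)"
    using assms by simp
  ultimately show ?thesis
    using \<open>2 \<le> r\<close> by linarith
qed

lemma lyapunov_difference_le:
  fixes f :: "'a::euclidean_space \<Rightarrow> real"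
  assumes S: "S1 mu L f grad" and minimizer: "\<forall>z. f xs \<le> f z"
    and "0 < s" "0 \<le> m" "2 \<le> r"
  shows "(s * (m + 1) * (m + r + 1) * (f (y - s *\<^sub>R grad y) - f xs)
           + 1/2 * (norm (m *\<^sub>R (y - x) + r *\<^sub>R (y - xs) - (s * (m + r)) *\<^sub>R grad y))\<^sup>2)
         - (s * m * (m + r) * (f x - f xs) + 1/2 * (norm (m *\<^sub>R (y - x) + r *\<^sub>R (y - xs)))\<^sup>2)
       \<le> - (mu * s * (m + r) / 2 * (m * (norm (y - x))\<^sup>2 + r * (norm (y - xs))\<^sup>2)
            + s\<^sup>2 * (m + r)\<^sup>2 * (1 - L * s) / 2 * (norm (grad y))\<^sup>2)"
proof -
  define N g w u where "N = m + r" and "g = grad y" and "w = y - x" and "u = y - xs"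
  define c where "c = s * (1 - L * s / 2)"
  define D where "D = N\<^sup>2 - (m + 1) * (N + 1)"
  have strong: "\<And>x y. f x + grad x \<bullet> (y - x) + mu / 2 * (norm (y - x))\<^sup>2 \<le> f y"
    using S by (simp add: S1_def)
  have step: "f (y - s *\<^sub>R g) \<le> f y - c * (norm g)\<^sup>2"
    using S1_gradient_step[OF S] unfolding c_def g_def .
  have at_x: "f y - g \<bullet> w + mu/2 * (norm w)\<^sup>2 \<le> f x"
    using strong[of y x] unfolding g_def w_def by (simp add: inner_diff_right norm_minus_commute)
  have at_xs: "f y - g \<bullet> u + mu/2 * (norm u)\<^sup>2 \<le> f xs"
    using strong[of y xs] unfolding g_def u_def by (simp add: inner_diff_right norm_minus_commute)
  have D_nonneg: "0 \<le> D"
    using momentum_weight_le[OF \<open>0 \<le> m\<close> \<open>2 \<le> r\<close>]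
    unfolding D_def N_def by simp
  have N_pos: "0 < N"
    using \<open>0 \<le> m\<close> \<open>2 \<le> r\<close> unfolding N_def by simp
  have norm_expand: "(norm (m *\<^sub>R w + r *\<^sub>R u - (s * N) *\<^sub>R g))\<^sup>2
      = (norm (m *\<^sub>R w + r *\<^sub>R u))\<^sup>2 - 2 * (s * N) * (m * (g \<bullet> w) + r * (g \<bullet> u)) + (s * N)\<^sup>2 * (norm g)\<^sup>2"
    unfolding power2_norm_eq_inner
    by (simp add: inner_diff_left inner_diff_right inner_add_right inner_commute algebra_simps
        power2_eq_square)
  text \<open>Since \<open>r N = (m + N + 1) + D\<close>, the inner products \<open>g \<bullet> w\<close> and \<open>g \<bullet> u\<close> can be
    grouped so that each group is bounded by one strong convexity inequality.\<close>
  have difference: "(s * (m + 1) * (N + 1) * (f (y - s *\<^sub>R g) - f xs)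
        + 1/2 * (norm (m *\<^sub>R w + r *\<^sub>R u - (s * N) *\<^sub>R g))\<^sup>2)
      - (s * m * N * (f x - f xs) + 1/2 * (norm (m *\<^sub>R w + r *\<^sub>R u))\<^sup>2)
      = s * m * N * (f (y - s *\<^sub>R g) - f x - g \<bullet> w)
        + s * (m + N + 1) * (f (y - s *\<^sub>R g) - f xs - g \<bullet> u)
        - s * D * (g \<bullet> u) + 1/2 * (s * N)\<^sup>2 * (norm g)\<^sup>2"
    unfolding norm_expand by (simp add: D_def N_def algebra_simps power2_eq_square)
  have "s * m * N * (f (y - s *\<^sub>R g) - f x - g \<bullet> w) \<le> s * m * N * (- c * (norm g)\<^sup>2 - mu/2 * (norm w)\<^sup>2)"
    using step at_x \<open>0 < s\<close> \<open>0 \<le> m\<close> N_pos by (intro mult_left_mono) auto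
  moreover have "s * (m + N + 1) * (f (y - s *\<^sub>R g) - f xs - g \<bullet> u)
      \<le> s * (m + N + 1) * (- mu/2 * (norm u)\<^sup>2 - c * (norm g)\<^sup>2)"
    using step at_xs \<open>0 < s\<close> \<open>0 \<le> m\<close> N_pos by (intro mult_left_mono) auto
  moreover have "s * D * (f (y - s *\<^sub>R g) - f xs + c * (norm g)\<^sup>2 + mu/2 * (norm u)\<^sup>2) \<le> s * D * (g \<bullet> u)"
    using step at_xs D_nonneg \<open>0 < s\<close> by (intro mult_left_mono) auto
  moreover have "0 \<le> s * D * (f (y - s *\<^sub>R g) - f xs)"
    using minimizer D_nonneg \<open>0 < s\<close> by simp
  moreover have "s * m * N * (- c * (norm g)\<^sup>2 - mu/2 * (norm w)\<^sup>2)
      + s * (m + N + 1) * (- mu/2 * (norm u)\<^sup>2 - c * (norm g)\<^sup>2)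
      - s * D * (c * (norm g)\<^sup>2 + mu/2 * (norm u)\<^sup>2) + 1/2 * (s * N)\<^sup>2 * (norm g)\<^sup>2
      = - (mu * s * N / 2 * (m * (norm w)\<^sup>2 + r * (norm u)\<^sup>2)
           + s\<^sup>2 * N\<^sup>2 * (1 - L * s) / 2 * (norm g)\<^sup>2)"
    unfolding c_def D_def N_def by (simp add: field_simps power2_eq_square)
  ultimately show ?thesis
    using difference unfolding N_def g_def w_def u_def by (simp add: algebra_simps)
qed

lemma lyapunov_scaled_le:
  fixes f :: "'a::euclidean_space \<Rightarrow> real"
  assumes S: "S1 mu L f grad" and "0 < mu" "mu \<le> L" "0 < s" "L * s < 1" "0 \<le> m" "2 \<le> r"
  shows "mu * s * ((1 - L * s) / 4)
         * (s * (m + 1) * (m + r + 1) * (f (y - s *\<^sub>R grad y) - f xs)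
            + 1/2 * (norm (m *\<^sub>R (y - x) + r *\<^sub>R (y - xs) - (s * (m + r)) *\<^sub>R grad y))\<^sup>2)
       \<le> mu * s * (m + r) / 2 * (m * (norm (y - x))\<^sup>2 + r * (norm (y - xs))\<^sup>2)
         + s\<^sup>2 * (m + r)\<^sup>2 * (1 - L * s) / 2 * (norm (grad y))\<^sup>2"
proof -
  define N g W U G q where "N = m + r" and "g = grad y" and "W = (norm (y - x))\<^sup>2"
    and "U = (norm (y - xs))\<^sup>2" and "G = (norm (grad y))\<^sup>2" and "q = 1 - L * s"
  have q: "0 < q" "q \<le> 1"
    using \<open>L * s < 1\<close> \<open>mu \<le> L\<close> \<open>0 < mu\<close> \<open>0 < s\<close> unfolding q_def by auto
  have mu_s: "mu * s \<le> 1"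
    using \<open>mu \<le> L\<close> \<open>0 < s\<close> \<open>L * s < 1\<close> mult_right_mono[of mu L s] by linarith
  have nonneg: "0 \<le> W" "0 \<le> U" "0 \<le> G"
    unfolding W_def U_def G_def by auto
  have N_pos: "0 < N"
    using \<open>0 \<le> m\<close> \<open>2 \<le> r\<close> unfolding N_def by simp
  have gap: "f (y - s *\<^sub>R g) - f xs \<le> G / (2 * mu)"
  proof -
    have "0 \<le> s * (1 - L * s / 2) * G"
      using q \<open>0 < s\<close> nonneg unfolding q_def by simp
    then have "f (y - s *\<^sub>R g) \<le> f y"
      using S1_gradient_step[OF S, of y s] unfolding g_def G_def by linarith
    moreover have "f y - f xs \<le> G / (2 * mu)"
      using strongly_convex_gap_le_gradient[of f grad mu y xs] S \<open>0 < mu\<close>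
      unfolding S1_def G_def by blast
    ultimately show ?thesis
      by linarith
  qed
  have "(norm (m *\<^sub>R (y - x) + r *\<^sub>R (y - xs) - (s * N) *\<^sub>R g))\<^sup>2
      \<le> 3 * (m\<^sup>2 * W + r\<^sup>2 * U + (s * N)\<^sup>2 * G)"
    using norm_add3_power2_le[of "m *\<^sub>R (y - x)" "r *\<^sub>R (y - xs)" "- ((s * N) *\<^sub>R g)"]
    unfolding W_def U_def G_def g_def by (simp add: power_mult_distrib)
  moreover have "s * (m + 1) * (N + 1) * (f (y - s *\<^sub>R g) - f xs)
      \<le> s * (m + 1) * (N + 1) * (G / (2 * mu))"
    using gap \<open>0 < s\<close> \<open>0 \<le> m\<close> N_pos by (intro mult_left_mono) auto
  ultimately have "s * (m + 1) * (N + 1) * (f (y - s *\<^sub>R g) - f xs)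
        + 1/2 * (norm (m *\<^sub>R (y - x) + r *\<^sub>R (y - xs) - (s * N) *\<^sub>R g))\<^sup>2
      \<le> s * (m + 1) * (N + 1) * (G / (2 * mu)) + 3/2 * (m\<^sup>2 * W + r\<^sup>2 * U + (s * N)\<^sup>2 * G)"
    by linarith
  then have "mu * s * (q / 4) * (s * (m + 1) * (N + 1) * (f (y - s *\<^sub>R g) - f xs)
        + 1/2 * (norm (m *\<^sub>R (y - x) + r *\<^sub>R (y - xs) - (s * N) *\<^sub>R g))\<^sup>2)
      \<le> mu * s * (q / 4) * (s * (m + 1) * (N + 1) * (G / (2 * mu))
          + 3/2 * (m\<^sup>2 * W + r\<^sup>2 * U + (s * N)\<^sup>2 * G))"
    using \<open>0 < mu\<close> \<open>0 < s\<close> q by (intro mult_left_mono) auto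
  also have "\<dots> = mu * s * m * (3/8 * q * m) * W + mu * s * r * (3/8 * q * r) * U
      + s\<^sup>2 * q * ((m + 1) * (N + 1) + 3 * (mu * s) * N\<^sup>2) / 8 * G"
    using \<open>0 < mu\<close> by (simp add: field_simps power2_eq_square)
  also have "\<dots> \<le> mu * s * m * (N / 2) * W + mu * s * r * (N / 2) * U
      + s\<^sup>2 * q * (N\<^sup>2 + 3 * N\<^sup>2) / 8 * G"
  proof -
    have "q * m \<le> m" "q * r \<le> r"
      using q \<open>0 \<le> m\<close> \<open>2 \<le> r\<close> by (simp_all add: mult_left_le_one_le)
    then have "3/8 * q * m \<le> N / 2" "3/8 * q * r \<le> N / 2"
      using \<open>0 \<le> m\<close> \<open>2 \<le> r\<close> N_def by linarith+
    then have "mu * s * m * (3/8 * q * m) \<le> mu * s * m * (N / 2)"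
      and "mu * s * r * (3/8 * q * r) \<le> mu * s * r * (N / 2)"
      using \<open>0 < mu\<close> \<open>0 < s\<close> \<open>0 \<le> m\<close> \<open>2 \<le> r\<close>
      by (simp_all only: mult_left_mono mult_nonneg_nonneg less_imp_le)
    moreover have "(m + 1) * (N + 1) + 3 * (mu * s) * N\<^sup>2 \<le> N\<^sup>2 + 3 * N\<^sup>2"
      using momentum_weight_le[OF \<open>0 \<le> m\<close> \<open>2 \<le> r\<close>] mult_right_mono[OF mu_s zero_le_power2, of N]
      unfolding N_def by linarith
    then have "s\<^sup>2 * q * ((m + 1) * (N + 1) + 3 * (mu * s) * N\<^sup>2) / 8 \<le> s\<^sup>2 * q * (N\<^sup>2 + 3 * N\<^sup>2) / 8"
      using q by (intro divide_right_mono mult_left_mono) auto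
    ultimately show ?thesis
      using nonneg by (intro add_mono mult_right_mono) auto
  qed
  also have "\<dots> = mu * s * N / 2 * (m * W + r * U) + s\<^sup>2 * N\<^sup>2 * q / 2 * G"
    by (simp add: field_simps)
  finally show ?thesis
    unfolding N_def g_def W_def U_def G_def q_def .
qed

theorem mainTheorem5:
  fixes f :: "'a::euclidean_space \<Rightarrow> real" and grad :: "'a \<Rightarrow> 'a"
    and mu L s r :: real and xs :: 'a and x y :: "nat \<Rightarrow> 'a" and k :: nat
  assumes "0 < mu" "mu \<le> L"
    and "S1 mu L f grad"
    and "\<forall>z. f xs \<le> f z"
    and "r \<ge> 2" "0 < s" "s < 1 / L"
    and "NAG grad s r x y"
    and "k \<ge> 1" "real k \<ge> max 0 ((3 * r\<^sup>2 - 4 * r - 12) / 8)"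
  shows "lyapE f grad s r xs x y (Suc k) - lyapE f grad s r xs x y k
           \<le> - mu * s * ((1 - L * s) / 4) * lyapE f grad s r xs x y (Suc k)"
proof -
  have "L * s < 1"
    using assms(1,2,7) by (simp add: field_simps)
  have "0 \<le> r" "0 \<le> real (Suc k)"
    using assms(5) by simp_all
  note decrease = lyapunov_difference_le[OF assms(3,4,6) \<open>0 \<le> real (Suc k)\<close> assms(5),
      where x = "x (Suc k)" and y = "y (Suc k)"]
  note scaled = lyapunov_scaled_le[OF assms(3,1,2,6) \<open>L * s < 1\<close> \<open>0 \<le> real (Suc k)\<close> assms(5),
      where x = "x (Suc k)" and y = "y (Suc k)" and xs = xs]
  show ?thesis
    unfolding lyapE_NAG[OF assms(8) \<open>0 \<le> r\<close> assms(9)] lyapE_Suc_NAG[OF assms(8) \<open>0 \<le> r\<close>]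
    using decrease scaled by linarith
qed

end
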